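(* Let $\Omega$, $d$ and $x_1^0,\dots,x_{m_1}^0$ be as in the context, let $v_M>0$ and $\epsilon>0$. Then there exists $t_\epsilon(v_M)>0$ such that for every $0<\tau_2\le t_\epsilon(v_M)$ there exists $l_\epsilon(\tau_2)>0$ with the following property: for all $1\le i\le m_1$ and all $(x,v)\in B(x_i^0,d)\times\overline{B(0,v_M)}$, if $X_s(x,v)\in\Omega_{l_\epsilon(\tau_2)}\cap B(x_i^0,d)$ for all $s\in[0,\tau_2]$, then $|V_s(x,v)-v|<\epsilon$ for all $s\in[0,t_\epsilon(v_M)]$.
   Context: $\Omega\subset\mathbb{R}^3$ is a connected bounded open set with $C^2$ boundary, $n$ the outward unit normal, $\Omega_\ell=\{x\in\Omega:d(x,\partial\Omega)<\ell\}$. There is $\delta(\Omega)>0$ such that for $0<d<\min\{1,\delta\}$ (fixed, also smaller than a uniform interior sphere radius $d_r$ of $\Omega$) there are $x_1^0,\dots,x_{m_1}^0\in\partial\Omega$ with $\partial\Omega\subset\bigcup_iB(x_i^0,d/8)$ and, for each $i$, an orthonormal basis $\{e_i^1,e_i^2,-n(x_i^0)\}$ and a $C^2$ function $\phi_i:\mathbb{R}^2\to\mathbb{R}$, $\phi_i(0)=0$, $\nabla\phi_i(0)=0$, $|\nabla\phi_i|<\frac1{100}$, such that in $B(x_i^0,3d)$ the boundary is the graph $\{x_i^0+u_1e_i^1+u_2e_i^2-\phi_i(u_1,u_2)n(x_i^0)\}$ and $\Omega$ the region $u_3>\phi_i$. $(X_s(x,v),V_s(x,v))$ denotes the position and velocity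 at time $s\ge0$ of the billiard (specular reflection) trajectory starting at $(x,v)$: it moves in straight lines with constant velocity in $\overline\Omega$ and, on hitting $\partial\Omega$ at a point $y$, the velocity $w$ is replaced by $w-2(w\cdot n(y))n(y)$ (trajectories with infinitely many rebounds in finite time or ending in grazing "stop" configurations form a null set). *)

theory Defs
  imports "HOL-Analysis.Analysis"
begin

definition grad2 :: "(real^2 \<Rightarrow> real) \<Rightarrow> real^2 \<Rightarrow> real^2" where
  "grad2 f u = (\<chi> k. frechet_derivative f (at u) (axis k 1))"

definition C2_fun :: "(real^2 \<Rightarrow> real) \<Rightarrow> bool" where
  "C2_fun f \<longleftrightarrow> (\<forall>u. f differentiable at u)
     \<and> (\<forall>k u. (\<lambda>w. grad2 f w $ k) differentiable at u)
     \<and> (\<forall>k. continuous_on UNIV (\<lambda>u. grad2 (\<lambda>w. grad2 f w $ k) u))"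

definition Omega_layer :: "(real^3) set \<Rightarrow> real \<Rightarrow> (real^3) set" where
  "Omega_layer \<Omega> l = {x \<in> \<Omega>. infdist x (frontier \<Omega>) < l}"

text \<open>Standing assumptions of the context: \<Omega> a connected bounded open (nonempty)
  set, boundary covered by the balls B(x0 i, d/8), i < m1, and in each B(x0 i, 3d)
  the boundary is the graph of the C^2 function phi i in the orthonormal frame
  {e1 i, e2 i, - n (x0 i)}, \<Omega> is the region above the graph, and n is the
  outward unit normal (given in the chart by the usual formula); moreover
  0 < d < 1 and d is smaller than a uniform interior sphere radius.\<close>
definition billiard_setting ::
  "(real^3) set \<Rightarrow> (real^3 \<Rightarrow> real^3) \<Rightarrow> real \<Rightarrow> nat \<Rightarrow> (nat \<Rightarrow> real^3)
   \<Rightarrow> (nat \<Rightarrow> real^3) \<Rightarrow> (nat \<Rightarrow> real^3) \<Rightarrow> (nat \<Rightarrow> real^2 \<Rightarrow> real) \<Rightarrow> bool" where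
  "billiard_setting \<Omega> n d m1 x0 e1 e2 \<phi> \<longleftrightarrow>
     open \<Omega> \<and> bounded \<Omega> \<and> connected \<Omega> \<and> \<Omega> \<noteq> {} \<and>
     0 < d \<and> d < 1 \<and>
     (\<exists>dr. d < dr \<and> (\<forall>y\<in>frontier \<Omega>. ball (y - dr *\<^sub>R n y) dr \<subseteq> \<Omega>)) \<and>
     frontier \<Omega> \<subseteq> (\<Union>i<m1. ball (x0 i) (d/8)) \<and>
     (\<forall>i<m1.
        x0 i \<in> frontier \<Omega> \<and>
        norm (e1 i) = 1 \<and> norm (e2 i) = 1 \<and> norm (n (x0 i)) = 1 \<and>
        e1 i \<bullet> e2 i = 0 \<and> e1 i \<bullet> n (x0 i) = 0 \<and> e2 i \<bullet> n (x0 i) = 0 \<and>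
        C2_fun (\<phi> i) \<and> \<phi> i 0 = 0 \<and> grad2 (\<phi> i) 0 = 0 \<and>
        (\<forall>u. norm (grad2 (\<phi> i) u) < 1/100) \<and>
        frontier \<Omega> \<inter> ball (x0 i) (3*d) =
          {x0 i + (u$1) *\<^sub>R e1 i + (u$2) *\<^sub>R e2 i - (\<phi> i u) *\<^sub>R n (x0 i) | u. True}
          \<inter> ball (x0 i) (3*d) \<and>
        \<Omega> \<inter> ball (x0 i) (3*d) =
          {x0 i + (u$1) *\<^sub>R e1 i + (u$2) *\<^sub>R e2 i - u3 *\<^sub>R n (x0 i) | u u3. u3 > \<phi> i u}
          \<inter> ball (x0 i) (3*d) \<and>
        (\<forall>u. x0 i + (u$1) *\<^sub>R e1 i + (u$2) *\<^sub>R e2 i - (\<phi> i u) *\<^sub>R n (x0 i)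
                \<in> ball (x0 i) (3*d) \<longrightarrow>
             n (x0 i + (u$1) *\<^sub>R e1 i + (u$2) *\<^sub>R e2 i - (\<phi> i u) *\<^sub>R n (x0 i)) =
             (1 / sqrt (1 + (norm (grad2 (\<phi> i) u))\<^sup>2)) *\<^sub>R
               ((grad2 (\<phi> i) u $ 1) *\<^sub>R e1 i + (grad2 (\<phi> i) u $ 2) *\<^sub>R e2 i + n (x0 i))))"

text \<open>(X, V) is a billiard (specular reflection) trajectory in \<Omega> starting at (x, v),
  defined for all times s \<ge> 0, with a locally finite set B of rebound times:
  X is continuous, stays in the closure of \<Omega>, has right derivative V; V is
  constant between rebounds (right-continuous), and at a rebound time b the point
  X b lies on the boundary and the incoming velocity w (left limit of V) is
  replaced by w - 2 (w . n(X b)) n(X b).\<close>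
definition billiard_traj ::
  "(real^3) set \<Rightarrow> (real^3 \<Rightarrow> real^3) \<Rightarrow> real^3 \<Rightarrow> real^3
   \<Rightarrow> (real \<Rightarrow> real^3) \<Rightarrow> (real \<Rightarrow> real^3) \<Rightarrow> bool" where
  "billiard_traj \<Omega> n x v X V \<longleftrightarrow>
     X 0 = x \<and> V 0 = v \<and> continuous_on {0..} X \<and>
     (\<forall>s\<ge>0. X s \<in> closure \<Omega>) \<and>
     (\<forall>s\<ge>0. (X has_vector_derivative V s) (at s within {s..})) \<and>
     (\<exists>B. B \<subseteq> {0<..} \<and> (\<forall>T. finite (B \<inter> {..T})) \<and>
        (\<forall>s t. 0 \<le> s \<and> s \<le> t \<and> B \<inter> {s<..t} = {} \<longrightarrow> V t = V s) \<and>
        (\<forall>b\<in>B. X b \<in> frontier \<Omega> \<and>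
           (\<exists>w. (V \<longlongrightarrow> w) (at_left b) \<and>
                V b = w - (2 * (w \<bullet> n (X b))) *\<^sub>R n (X b))))"

end

(* Work in the chart at x0 i, where the boundary is the graph of phi i: H is the height above
   the graph and N = - grad H, so that the outward normal is n = N / |N| on the boundary.
   While the trajectory stays in the chart, the potential
     |V s - v| + 2 max (V s . N (X s)) 0 - 2 K s
   is nonincreasing. Between rebounds V is constant and V . N (X s) grows at rate at most K - 1,
   because the second derivatives of phi i are bounded. At a rebound the incoming velocity w has
   w . N >= 0, and the reflection makes V . N <= 0 while moving V by at most 2 (w . N).
   If X stays in Omega_l during [0, tau2] there is no rebound then, so H (X s) decreases at rate
   at least v . N (x) - K s; as H (x) < 2 l and H (X tau2) > 0, this bounds v . N (x) by
   2 l / tau2 + K tau2 / 2. Hence |V s - v| <= 4 l / tau2 + K tau2 + 2 K s, which is smaller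
   than epsilon once t_eps and then l are chosen small. *)

theory Submission
  imports Defs
begin

section \<open>Monotonicity from one-sided estimates\<close>

lemma real_interval_induct:
  fixes P :: "real \<Rightarrow> bool"
  assumes ab: "a \<le> b" and Pa: "P a"
    and left: "\<And>t. a < t \<Longrightarrow> t \<le> b \<Longrightarrow> (\<And>u. a \<le> u \<Longrightarrow> u < t \<Longrightarrow> P u) \<Longrightarrow> P t"
    and right: "\<And>t. a \<le> t \<Longrightarrow> t < b \<Longrightarrow> P t \<Longrightarrow> \<exists>\<delta>>0. \<forall>s. t < s \<and> s < t + \<delta> \<longrightarrow> P s"
  shows "P b"
proof -
  define S where "S = {t. a \<le> t \<and> t \<le> b \<and> (\<forall>u. a \<le> u \<and> u \<le> t \<longrightarrow> P u)}"
  define c where "c = Sup S"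
  have aS: "a \<in> S" using ab Pa by (auto simp: S_def)
  have bdd: "bdd_above S" by (auto simp: S_def bdd_above_def)
  have ac: "a \<le> c" using aS bdd by (simp add: c_def cSup_upper)
  have cb: "c \<le> b" unfolding c_def using aS by (intro cSup_least) (auto simp: S_def)
  have below: "P u" if "a \<le> u" "u < c" for u
  proof -
    obtain t where "t \<in> S" "u < t" using \<open>u < c\<close> aS unfolding c_def by (metis less_cSupD empty_iff)
    then show ?thesis using that by (auto simp: S_def)
  qed
  have "P c" using ac below left[OF _ cb] Pa by (cases "c = a") auto
  have "c = b"
  proof (rule ccontr)
    assume "c \<noteq> b"
    with cb have "c < b" by simp
    obtain \<delta> where \<delta>: "0 < \<delta>" "\<forall>s. c < s \<and> s < c + \<delta> \<longrightarrow> P s"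
      using right[OF ac \<open>c < b\<close> \<open>P c\<close>] by blast
    define t where "t = min (c + \<delta>/2) b"
    have "P u" if "a \<le> u" "u \<le> t" for u
      using below[OF \<open>a \<le> u\<close>] \<open>P c\<close> \<delta>(2)[rule_format, of u] that \<delta>(1)
      by (cases u c rule: linorder_cases) (auto simp: t_def)
    then have "t \<in> S" using ac \<open>c < b\<close> \<delta>(1) by (auto simp: S_def t_def)
    then have "t \<le> c" using bdd by (simp add: c_def cSup_upper)
    then show False using \<open>c < b\<close> \<delta>(1) by (auto simp: t_def)
  qed
  with \<open>P c\<close> show ?thesis by simp
qed

lemma le_by_right_slope_bound:
  fixes f :: "real \<Rightarrow> real"
  assumes ab: "a \<le> b" and \<zeta>: "0 < \<zeta>"
    and right: "\<And>t. a \<le> t \<Longrightarrow> t < b \<Longrightarrow>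
      \<exists>\<delta>>0. \<forall>s. t < s \<and> s < t + \<delta> \<longrightarrow> f s \<le> f t + \<zeta> * (s - t)"
    and left: "\<And>t \<eta>. a < t \<Longrightarrow> t \<le> b \<Longrightarrow> 0 < \<eta> \<Longrightarrow>
      \<exists>\<delta>>0. \<forall>s. t - \<delta> < s \<and> s < t \<longrightarrow> f t \<le> f s + \<eta>"
  shows "f b \<le> f a + \<zeta> * (b - a)"
proof (rule real_interval_induct[where P = "\<lambda>u. f u \<le> f a + \<zeta> * (u - a)", OF ab])
  fix t assume t: "a < t" "t \<le> b" and below: "\<And>u. a \<le> u \<Longrightarrow> u < t \<Longrightarrow> f u \<le> f a + \<zeta> * (u - a)"
  show "f t \<le> f a + \<zeta> * (t - a)"
  proof (rule field_le_epsilon)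
    fix e :: real assume "0 < e"
    obtain \<delta> where \<delta>: "0 < \<delta>" "\<forall>s. t - \<delta> < s \<and> s < t \<longrightarrow> f t \<le> f s + e"
      using left[OF t \<open>0 < e\<close>] by blast
    define s where "s = max (t - \<delta>/2) ((a + t)/2)"
    have s: "t - \<delta> < s" "s < t" "a \<le> s" using \<delta> t by (auto simp: s_def max_def)
    have "f t \<le> f s + e" using \<delta> s by auto
    also have "\<dots> \<le> f a + \<zeta> * (s - a) + e" using below[OF s(3) s(2)] by simp
    also have "\<dots> \<le> f a + \<zeta> * (t - a) + e" using s \<zeta> by (simp add: mult_left_mono)
    finally show "f t \<le> f a + \<zeta> * (t - a) + e" .
  qed
next
  fix t assume t: "a \<le> t" "t < b" "f t \<le> f a + \<zeta> * (t - a)"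
  obtain \<delta> where \<delta>: "0 < \<delta>" "\<forall>s. t < s \<and> s < t + \<delta> \<longrightarrow> f s \<le> f t + \<zeta> * (s - t)"
    using right[OF t(1,2)] by blast
  have "f s \<le> f a + \<zeta> * (s - a)" if "t < s" "s < t + \<delta>" for s
    using \<delta>(2)[rule_format, of s] that t(3) by (simp add: algebra_simps)
  with \<delta>(1) show "\<exists>\<delta>>0. \<forall>s. t < s \<and> s < t + \<delta> \<longrightarrow> f s \<le> f a + \<zeta> * (s - a)" by blast
qed simp

text \<open>The hypotheses say that the upper right Dini derivative of \<open>f\<close> is \<open>\<le> 0\<close> and that \<open>f\<close>
  never jumps up from the left: billiard velocities jump at rebounds, so two-sided derivatives
  are not available.\<close>
lemma nonincreasing_by_right_slopes:
  fixes f :: "real \<Rightarrow> real"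
  assumes ab: "a \<le> b"
    and right: "\<And>t \<eta>. a \<le> t \<Longrightarrow> t < b \<Longrightarrow> 0 < \<eta> \<Longrightarrow>
      \<exists>\<delta>>0. \<forall>s. t < s \<and> s < t + \<delta> \<longrightarrow> f s \<le> f t + \<eta> * (s - t)"
    and left: "\<And>t \<eta>. a < t \<Longrightarrow> t \<le> b \<Longrightarrow> 0 < \<eta> \<Longrightarrow>
      \<exists>\<delta>>0. \<forall>s. t - \<delta> < s \<and> s < t \<longrightarrow> f t \<le> f s + \<eta>"
  shows "f b \<le> f a"
proof (rule field_le_epsilon)
  fix e :: real assume "0 < e"
  define \<zeta> where "\<zeta> = e / (b - a + 1)"
  have "0 < \<zeta>" using \<open>0 < e\<close> ab by (simp add: \<zeta>_def)
  have "f b \<le> f a + \<zeta> * (b - a)"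
    by (rule le_by_right_slope_bound[OF ab \<open>0 < \<zeta>\<close> right[OF _ _ \<open>0 < \<zeta>\<close>] left])
  also have "\<zeta> * (b - a) \<le> e" using \<open>0 < e\<close> ab by (simp add: \<zeta>_def field_simps)
  finally show "f b \<le> f a + e" by simp
qed

lemma has_real_derivative_right_estimate:
  fixes g :: "real \<Rightarrow> real"
  assumes "(g has_real_derivative r) (at t within {t..})" "0 < \<eta>"
  shows "\<exists>\<delta>>0. \<forall>s. t < s \<and> s < t + \<delta> \<longrightarrow> \<bar>g s - g t - r * (s - t)\<bar> \<le> \<eta> * (s - t)"
proof -
  have "(g has_derivative (\<lambda>h. r * h)) (at t within {t..})"
    using assms(1) by (simp add: has_field_derivative_def)
  then obtain \<delta> where "0 < \<delta>"
    "\<forall>y\<in>{t..}. norm (y - t) < \<delta> \<longrightarrow> norm (g y - g t - r * (y - t)) \<le> \<eta> * norm (y - t)"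
    using assms(2) unfolding has_derivative_within_alt by blast
  then show ?thesis by (intro exI[of _ \<delta>]) auto
qed

lemma continuous_on_left_approx:
  fixes g :: "real \<Rightarrow> 'a::real_normed_vector"
  assumes "continuous_on {a..b} g" "a < t" "t \<le> b" "0 < \<eta>"
  shows "\<exists>\<delta>>0. \<forall>s. t - \<delta> < s \<and> s < t \<longrightarrow> norm (g s - g t) < \<eta>"
proof -
  obtain \<delta> where "0 < \<delta>" "\<forall>s\<in>{a..b}. dist s t < \<delta> \<longrightarrow> dist (g s) (g t) < \<eta>"
    using assms unfolding continuous_on_iff by (metis atLeastAtMost_iff less_imp_le)
  then show ?thesis
    using assms by (intro exI[of _ "min \<delta> (t - a)"]) (auto simp: dist_real_def dist_norm)
qed

lemma nonincreasing_by_right_derivative: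
  fixes f :: "real \<Rightarrow> real"
  assumes ab: "a \<le> b" and cont: "continuous_on {a..b} f"
    and deriv: "\<And>t. a \<le> t \<Longrightarrow> t < b \<Longrightarrow> \<exists>r\<le>0. (f has_real_derivative r) (at t within {t..})"
  shows "f b \<le> f a"
proof (rule nonincreasing_by_right_slopes[OF ab])
  fix t \<eta> :: real assume t: "a \<le> t" "t < b" "0 < \<eta>"
  obtain r where r: "r \<le> 0" "(f has_real_derivative r) (at t within {t..})" using deriv t by blast
  obtain \<delta> where \<delta>: "0 < \<delta>" "\<forall>s. t < s \<and> s < t + \<delta> \<longrightarrow> \<bar>f s - f t - r * (s - t)\<bar> \<le> \<eta> * (s - t)"
    using has_real_derivative_right_estimate[OF r(2) t(3)] by blast
  have "f s \<le> f t + \<eta> * (s - t)" if "t < s" "s < t + \<delta>" for s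
  proof -
    have "r * (s - t) \<le> 0" using r(1) that by (simp add: mult_nonpos_nonneg)
    then show ?thesis using \<delta>(2) that by (auto simp: abs_le_iff)
  qed
  with \<delta>(1) show "\<exists>\<delta>>0. \<forall>s. t < s \<and> s < t + \<delta> \<longrightarrow> f s \<le> f t + \<eta> * (s - t)" by blast
next
  fix t \<eta> :: real assume "a < t" "t \<le> b" "0 < \<eta>"
  then obtain \<delta> where "0 < \<delta>" "\<forall>s. t - \<delta> < s \<and> s < t \<longrightarrow> norm (f s - f t) < \<eta>"
    using continuous_on_left_approx[OF cont] by blast
  then show "\<exists>\<delta>>0. \<forall>s. t - \<delta> < s \<and> s < t \<longrightarrow> f t \<le> f s + \<eta>" by force
qed

section \<open>Graph charts\<close>

text \<open>Writing \<open>y = x0 + u1 e1 + u2 e2 - u3 n0\<close> in the frame \<open>{e1, e2, -n0}\<close>, the chart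
  coordinates are \<open>(u1, u2)\<close> and the height is \<open>u3 - f(u1, u2)\<close>, positive above the graph
  of \<open>f\<close>. The gradient of the height is \<open>-chart_normal\<close>, whose normalisation is the outward
  normal on the graph.\<close>

definition chart_coord :: "real^3 \<Rightarrow> real^3 \<Rightarrow> real^3 \<Rightarrow> real^3 \<Rightarrow> real^2" where
  "chart_coord x0 e1 e2 y = (\<chi> j. if j = 1 then (y - x0) \<bullet> e1 else (y - x0) \<bullet> e2)"

definition chart_height ::
  "real^3 \<Rightarrow> real^3 \<Rightarrow> real^3 \<Rightarrow> real^3 \<Rightarrow> (real^2 \<Rightarrow> real) \<Rightarrow> real^3 \<Rightarrow> real" where
  "chart_height x0 e1 e2 n0 f y = - ((y - x0) \<bullet> n0) - f (chart_coord x0 e1 e2 y)"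

definition chart_normal ::
  "real^3 \<Rightarrow> real^3 \<Rightarrow> real^3 \<Rightarrow> real^3 \<Rightarrow> (real^2 \<Rightarrow> real) \<Rightarrow> real^3 \<Rightarrow> real^3" where
  "chart_normal x0 e1 e2 n0 f y =
     (grad2 f (chart_coord x0 e1 e2 y) $ 1) *\<^sub>R e1 + (grad2 f (chart_coord x0 e1 e2 y) $ 2) *\<^sub>R e2 + n0"

definition orthonormal3 :: "real^3 \<Rightarrow> real^3 \<Rightarrow> real^3 \<Rightarrow> bool" where
  "orthonormal3 e1 e2 n0 \<longleftrightarrow> norm e1 = 1 \<and> norm e2 = 1 \<and> norm n0 = 1 \<and>
     e1 \<bullet> e2 = 0 \<and> e1 \<bullet> n0 = 0 \<and> e2 \<bullet> n0 = 0"

lemma chart_coord_nth [simp]: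
  "chart_coord x0 e1 e2 y $ 1 = (y - x0) \<bullet> e1" "chart_coord x0 e1 e2 y $ 2 = (y - x0) \<bullet> e2"
  by (simp_all add: chart_coord_def)

lemma vec2_eq_axis_comb: "(k::real^2) = (k$1) *\<^sub>R axis 1 1 + (k$2) *\<^sub>R axis 2 1"
  by (simp add: vec_eq_iff forall_2 axis_def)

lemma vec2_eq_iff_nth: "(u::real^2) = w \<longleftrightarrow> u $ 1 = w $ 1 \<and> u $ 2 = w $ 2"
  by (simp add: vec_eq_iff forall_2)

lemma norm_vec2_sq: "(norm (g::real^2))^2 = (g$1)^2 + (g$2)^2"
  by (simp add: norm_vec_def L2_set_def sum_2)

lemma has_derivative_grad2:
  assumes "f differentiable (at u)"
  shows "(f has_derivative (\<lambda>k. k$1 * grad2 f u $ 1 + k$2 * grad2 f u $ 2)) (at u)"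
proof -
  let ?L = "frechet_derivative f (at u)"
  have d: "(f has_derivative ?L) (at u)" using assms frechet_derivative_works by blast
  then have lin: "linear ?L" using has_derivative_linear by blast
  have "?L k = k$1 * grad2 f u $ 1 + k$2 * grad2 f u $ 2" for k
  proof -
    have "?L k = ?L ((k$1) *\<^sub>R axis 1 1 + (k$2) *\<^sub>R axis 2 1)" by (subst vec2_eq_axis_comb) simp
    also have "\<dots> = k$1 * ?L (axis 1 1) + k$2 * ?L (axis 2 1)"
      using lin by (simp add: linear_add linear_scale)
    finally show ?thesis by (simp add: grad2_def)
  qed
  then have "?L = (\<lambda>k. k$1 * grad2 f u $ 1 + k$2 * grad2 f u $ 2)" by (rule ext)
  with d show ?thesis by simp
qed

lemma has_derivative_chart_coord: "(chart_coord x0 e1 e2 has_derivative chart_coord 0 e1 e2) (at y)"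
proof -
  have "linear (chart_coord 0 e1 e2)"
    by (rule linearI) (simp_all add: vec2_eq_iff_nth inner_add_left)
  then have "bounded_linear (chart_coord 0 e1 e2)" by (simp add: linear_conv_bounded_linear)
  moreover have "chart_coord x0 e1 e2 = (\<lambda>y. chart_coord 0 e1 e2 y - chart_coord 0 e1 e2 x0)"
    by (rule ext) (simp add: vec2_eq_iff_nth inner_diff_left)
  ultimately show ?thesis
    using bounded_linear.has_derivative[of "chart_coord 0 e1 e2" "\<lambda>y. y" "\<lambda>y. y"]
    by (auto intro!: derivative_eq_intros)
qed

lemma has_derivative_comp_chart_coord:
  fixes g :: "real^2 \<Rightarrow> real"
  assumes "g differentiable (at (chart_coord x0 e1 e2 y))"
  shows "((\<lambda>y. g (chart_coord x0 e1 e2 y)) has_derivative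
     (\<lambda>h. (h \<bullet> e1) * grad2 g (chart_coord x0 e1 e2 y) $ 1
        + (h \<bullet> e2) * grad2 g (chart_coord x0 e1 e2 y) $ 2)) (at y)"
  using has_derivative_compose[OF has_derivative_chart_coord has_derivative_grad2[OF assms]]
  by (simp add: chart_coord_def)

lemma has_derivative_chart_height:
  assumes "f differentiable (at (chart_coord x0 e1 e2 y))"
  shows "(chart_height x0 e1 e2 n0 f has_derivative (\<lambda>h. - (h \<bullet> chart_normal x0 e1 e2 n0 f y))) (at y)"
proof -
  have "((\<lambda>y. - ((y - x0) \<bullet> n0)) has_derivative (\<lambda>h. - (h \<bullet> n0))) (at y)"
    by (auto intro!: derivative_eq_intros)
  from has_derivative_diff[OF this has_derivative_comp_chart_coord[OF assms]]
  show ?thesis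
    by (simp add: chart_height_def[abs_def] chart_normal_def inner_add_right algebra_simps)
qed

lemma abs_inner_comb_le:
  fixes a :: "real^2" and h e1 e2 :: "real^3"
  assumes "norm e1 = 1" "norm e2 = 1"
  shows "\<bar>(h \<bullet> e1) * a $ 1 + (h \<bullet> e2) * a $ 2\<bar> \<le> 2 * norm a * norm h"
proof -
  have "\<bar>h \<bullet> e1\<bar> \<le> norm h" "\<bar>h \<bullet> e2\<bar> \<le> norm h"
    using Cauchy_Schwarz_ineq2[of h e1] Cauchy_Schwarz_ineq2[of h e2] assms by auto
  moreover have "\<bar>a $ 1\<bar> \<le> norm a" "\<bar>a $ 2\<bar> \<le> norm a" by (rule component_le_norm_cart)+
  ultimately have "\<bar>h \<bullet> e1\<bar> * \<bar>a $ 1\<bar> \<le> norm h * norm a" "\<bar>h \<bullet> e2\<bar> * \<bar>a $ 2\<bar> \<le> norm h * norm a"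
    by (auto intro!: mult_mono)
  then show ?thesis
    using abs_triangle_ineq[of "(h \<bullet> e1) * a $ 1" "(h \<bullet> e2) * a $ 2"]
    unfolding abs_mult mult.assoc[of 2] mult.commute[of "norm a"] by linarith
qed

lemma has_derivative_inner_chart_normal:
  fixes f :: "real^2 \<Rightarrow> real"
  assumes "(\<lambda>w. grad2 f w $ 1) differentiable (at (chart_coord x0 e1 e2 y))"
    and "(\<lambda>w. grad2 f w $ 2) differentiable (at (chart_coord x0 e1 e2 y))"
    and e: "norm e1 = 1" "norm e2 = 1"
  obtains D where "((\<lambda>y. c \<bullet> chart_normal x0 e1 e2 n0 f y) has_derivative D) (at y)"
    "\<And>h. \<bar>D h\<bar> \<le> 2 * (norm (grad2 (\<lambda>w. grad2 f w $ 1) (chart_coord x0 e1 e2 y))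
         + norm (grad2 (\<lambda>w. grad2 f w $ 2) (chart_coord x0 e1 e2 y))) * norm c * norm h"
proof -
  define a1 where "a1 = grad2 (\<lambda>w. grad2 f w $ 1) (chart_coord x0 e1 e2 y)"
  define a2 where "a2 = grad2 (\<lambda>w. grad2 f w $ 2) (chart_coord x0 e1 e2 y)"
  note D1 = has_derivative_comp_chart_coord[OF assms(1), folded a1_def]
  note D2 = has_derivative_comp_chart_coord[OF assms(2), folded a2_def]
  define D where "D h = ((h \<bullet> e1) * a1 $ 1 + (h \<bullet> e2) * a1 $ 2) * (c \<bullet> e1)
     + ((h \<bullet> e1) * a2 $ 1 + (h \<bullet> e2) * a2 $ 2) * (c \<bullet> e2)" for h
  have "(\<lambda>y. c \<bullet> chart_normal x0 e1 e2 n0 f y) = (\<lambda>y. grad2 f (chart_coord x0 e1 e2 y) $ 1 * (c \<bullet> e1)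
     + grad2 f (chart_coord x0 e1 e2 y) $ 2 * (c \<bullet> e2) + c \<bullet> n0)"
    by (rule ext) (simp add: chart_normal_def inner_add_right)
  then have "((\<lambda>y. c \<bullet> chart_normal x0 e1 e2 n0 f y) has_derivative D) (at y)"
    unfolding D_def[abs_def]
    using has_derivative_add[OF has_derivative_add[OF has_derivative_mult_right[OF D1, of "c \<bullet> e1"]
        has_derivative_mult_right[OF D2, of "c \<bullet> e2"]] has_derivative_const[of "c \<bullet> n0"]]
    by (simp add: mult.commute)
  moreover have "\<bar>D h\<bar> \<le> 2 * (norm a1 + norm a2) * norm c * norm h" for h
  proof -
    have ce: "\<bar>c \<bullet> e1\<bar> \<le> norm c" "\<bar>c \<bullet> e2\<bar> \<le> norm c"
      using Cauchy_Schwarz_ineq2[of c e1] Cauchy_Schwarz_ineq2[of c e2] e by auto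
    have "\<bar>((h \<bullet> e1) * a1 $ 1 + (h \<bullet> e2) * a1 $ 2) * (c \<bullet> e1)\<bar> \<le> (2 * norm a1 * norm h) * norm c"
      unfolding abs_mult by (rule mult_mono[OF abs_inner_comb_le[OF e] ce(1)]) auto
    moreover have "\<bar>((h \<bullet> e1) * a2 $ 1 + (h \<bullet> e2) * a2 $ 2) * (c \<bullet> e2)\<bar> \<le> (2 * norm a2 * norm h) * norm c"
      unfolding abs_mult by (rule mult_mono[OF abs_inner_comb_le[OF e] ce(2)]) auto
    ultimately show ?thesis unfolding D_def by (simp add: algebra_simps)
  qed
  ultimately show ?thesis using that unfolding a1_def a2_def by blast
qed

lemma orthonormal3_inner:
  assumes "orthonormal3 e1 e2 n0"
  shows "e1 \<bullet> e1 = 1" "e2 \<bullet> e2 = 1" "n0 \<bullet> n0 = 1" "e1 \<bullet> e2 = 0" "e1 \<bullet> n0 = 0" "e2 \<bullet> n0 = 0"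
    "e2 \<bullet> e1 = 0" "n0 \<bullet> e1 = 0" "n0 \<bullet> e2 = 0"
  using assms unfolding orthonormal3_def by (auto simp: inner_commute norm_eq_1)

lemma chart_coord_frame_point:
  assumes "orthonormal3 e1 e2 n0"
  shows "chart_coord x0 e1 e2 (x0 + (u$1) *\<^sub>R e1 + (u$2) *\<^sub>R e2 - t *\<^sub>R n0) = u"
  using orthonormal3_inner[OF assms]
  by (simp add: vec2_eq_iff_nth inner_add_left inner_diff_left)

lemma chart_height_frame_point:
  assumes "orthonormal3 e1 e2 n0"
  shows "chart_height x0 e1 e2 n0 f (x0 + (u$1) *\<^sub>R e1 + (u$2) *\<^sub>R e2 - t *\<^sub>R n0) = t - f u"
  using orthonormal3_inner[OF assms] chart_coord_frame_point[OF assms]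
  by (simp add: chart_height_def inner_add_left inner_diff_left)

lemma norm_chart_normal_sq:
  assumes "orthonormal3 e1 e2 n0"
  shows "(norm (chart_normal x0 e1 e2 n0 f y))^2 = 1 + (norm (grad2 f (chart_coord x0 e1 e2 y)))^2"
  unfolding chart_normal_def power2_norm_eq_inner norm_vec2_sq[unfolded power2_norm_eq_inner]
  using orthonormal3_inner[OF assms]
  by (simp add: inner_add_left inner_add_right power2_eq_square algebra_simps)

lemma norm_chart_normal_bounds:
  assumes "orthonormal3 e1 e2 n0" "norm (grad2 f (chart_coord x0 e1 e2 y)) < 1/100"
  shows "1 \<le> norm (chart_normal x0 e1 e2 n0 f y)" "norm (chart_normal x0 e1 e2 n0 f y) \<le> 2"
proof -
  let ?N = "norm (chart_normal x0 e1 e2 n0 f y)" and ?g = "norm (grad2 f (chart_coord x0 e1 e2 y))"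
  have e: "?N^2 = 1 + ?g^2" by (rule norm_chart_normal_sq[OF assms(1)])
  have "?g^2 \<le> 1" using assms(2) by (intro power_le_one) auto
  with e have "1^2 \<le> ?N^2" "?N^2 \<le> 2^2" by simp_all
  then show "1 \<le> ?N" "?N \<le> 2" by (auto intro: power2_le_imp_le)
qed

lemma norm_chart_coord_le:
  assumes "norm e1 = 1" "norm e2 = 1"
  shows "norm (chart_coord x0 e1 e2 y) \<le> 2 * norm (y - x0)"
proof -
  have "norm (chart_coord x0 e1 e2 y) \<le> \<bar>(y - x0) \<bullet> e1\<bar> + \<bar>(y - x0) \<bullet> e2\<bar>"
    using norm_le_l1_cart[of "chart_coord x0 e1 e2 y"] by (simp add: sum_2)
  also have "\<dots> \<le> norm (y - x0) + norm (y - x0)"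
    using Cauchy_Schwarz_ineq2[of "y - x0" e1] Cauchy_Schwarz_ineq2[of "y - x0" e2] assms
    by (intro add_mono) auto
  finally show ?thesis by simp
qed

lemma C2_funD:
  assumes "C2_fun f"
  shows "\<And>u. f differentiable (at u)" "\<And>k u. (\<lambda>w. grad2 f w $ k) differentiable (at u)"
    "\<And>k. continuous_on UNIV (\<lambda>u. grad2 (\<lambda>w. grad2 f w $ k) u)"
  using assms unfolding C2_fun_def by auto

lemma continuous_on_chart_coord: "continuous_on UNIV (chart_coord x0 e1 e2)"
  by (rule continuous_at_imp_continuous_on)
    (intro ballI has_derivative_continuous[OF has_derivative_chart_coord])

lemma continuous_on_chart_height:
  assumes "C2_fun f"
  shows "continuous_on UNIV (chart_height x0 e1 e2 n0 f)"
  by (rule continuous_at_imp_continuous_on)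
    (intro ballI has_derivative_continuous[OF has_derivative_chart_height[OF C2_funD(1)[OF assms]]])

lemma continuous_on_chart_normal:
  assumes "C2_fun f"
  shows "continuous_on UNIV (chart_normal x0 e1 e2 n0 f)"
proof -
  have "continuous_on UNIV (\<lambda>w. grad2 f w $ k)" for k
    by (rule continuous_at_imp_continuous_on)
      (intro ballI differentiable_imp_continuous_within C2_funD(2)[OF assms])
  then have "continuous_on UNIV (\<lambda>y. grad2 f (chart_coord x0 e1 e2 y) $ k)" for k
    using continuous_on_compose2[OF _ continuous_on_chart_coord] by blast
  then show ?thesis unfolding chart_normal_def[abs_def]
    by (intro continuous_on_add continuous_on_scaleR continuous_on_const)
qed

lemma chart_height_lipschitz:
  assumes "orthonormal3 e1 e2 n0" "C2_fun f" "\<forall>u. norm (grad2 f u) < 1/100"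
  shows "\<bar>chart_height x0 e1 e2 n0 f y - chart_height x0 e1 e2 n0 f z\<bar> \<le> 2 * norm (y - z)"
proof -
  let ?N = "chart_normal x0 e1 e2 n0 f"
  have "norm (chart_height x0 e1 e2 n0 f y - chart_height x0 e1 e2 n0 f z) \<le> 2 * norm (y - z)"
  proof (rule differentiable_bound[where S=UNIV and f' = "\<lambda>y h. - (h \<bullet> ?N y)"])
    fix x :: "real^3"
    show "(chart_height x0 e1 e2 n0 f has_derivative (\<lambda>h. - (h \<bullet> ?N x))) (at x within UNIV)"
      using has_derivative_chart_height[OF C2_funD(1)[OF assms(2)]] by simp
    show "onorm (\<lambda>h. - (h \<bullet> ?N x)) \<le> 2"
    proof (rule onorm_le)
      fix h
      have "norm (- (h \<bullet> ?N x)) \<le> norm h * norm (?N x)" using Cauchy_Schwarz_ineq2 by simp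
      also have "\<dots> \<le> norm h * 2"
        using norm_chart_normal_bounds(2)[OF assms(1)] assms(3) by (simp add: mult_left_mono)
      finally show "norm (- (h \<bullet> ?N x)) \<le> 2 * norm h" by simp
    qed
  qed auto
  then show ?thesis by simp
qed

lemma uniform_second_derivative_bound:
  fixes f :: "nat \<Rightarrow> real^2 \<Rightarrow> real"
  assumes "\<And>i. i < m \<Longrightarrow> C2_fun (f i)"
  obtains M where "0 \<le> M"
    "\<And>i k u. i < m \<Longrightarrow> norm u \<le> R \<Longrightarrow> norm (grad2 (\<lambda>w. grad2 (f i) w $ k) u) \<le> M"
proof -
  let ?D = "\<lambda>p. \<lambda>u. grad2 (\<lambda>w. grad2 (f (fst p)) w $ snd p) u"
  have "\<exists>b. \<forall>u\<in>cball 0 R. norm (?D p u) \<le> b" if "p \<in> {..<m} \<times> UNIV" for p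
  proof -
    have "continuous_on (cball 0 R) (?D p)"
      using C2_funD(3)[OF assms] that continuous_on_subset by fastforce
    then have "bounded (?D p ` cball 0 R)"
      by (intro compact_imp_bounded compact_continuous_image) auto
    then show ?thesis unfolding bounded_iff by blast
  qed
  then obtain b where b: "\<And>p u. p \<in> {..<m} \<times> UNIV \<Longrightarrow> u \<in> cball 0 R \<Longrightarrow> norm (?D p u) \<le> b p"
    by metis
  define M where "M = (\<Sum>p\<in>{..<m} \<times> UNIV. \<bar>b p\<bar>)"
  have "norm (grad2 (\<lambda>w. grad2 (f i) w $ k) u) \<le> M" if "i < m" "norm u \<le> R" for i k u
  proof -
    have "norm (?D (i, k) u) \<le> \<bar>b (i, k)\<bar>" using b[of "(i, k)" u] that by fastforce
    also have "\<dots> \<le> M" unfolding M_def using that by (intro member_le_sum) auto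
    finally show ?thesis by simp
  qed
  moreover have "0 \<le> M" unfolding M_def by (intro sum_nonneg) auto
  ultimately show ?thesis using that by blast
qed

lemma billiard_setting_basics:
  assumes "billiard_setting \<Omega> n d m1 x0 e1 e2 \<phi>"
  shows "open \<Omega>" "0 < d" "frontier \<Omega> \<subseteq> (\<Union>i<m1. ball (x0 i) (d/8))"
    "\<And>i. i < m1 \<Longrightarrow> x0 i \<in> frontier \<Omega>"
  using assms unfolding billiard_setting_def by auto

lemma billiard_setting_chart:
  assumes setting: "billiard_setting \<Omega> n d m1 x0 e1 e2 \<phi>" and i: "i < m1"
  defines "H \<equiv> chart_height (x0 i) (e1 i) (e2 i) (n (x0 i)) (\<phi> i)"
    and "N \<equiv> chart_normal (x0 i) (e1 i) (e2 i) (n (x0 i)) (\<phi> i)"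
  shows "orthonormal3 (e1 i) (e2 i) (n (x0 i))" "C2_fun (\<phi> i)" "\<forall>u. norm (grad2 (\<phi> i) u) < 1/100"
    and "\<And>y. y \<in> frontier \<Omega> \<Longrightarrow> y \<in> ball (x0 i) (3*d) \<Longrightarrow> H y = 0 \<and> n y = (1 / norm (N y)) *\<^sub>R N y"
    and "\<And>y. y \<in> \<Omega> \<Longrightarrow> y \<in> ball (x0 i) (3*d) \<Longrightarrow> 0 < H y"
proof -
  \<comment> \<open>skip the eight global conditions of \<open>billiard_setting\<close>\<close>
  note chart = setting[unfolded billiard_setting_def, THEN conjunct2, THEN conjunct2, THEN conjunct2,
      THEN conjunct2, THEN conjunct2, THEN conjunct2, THEN conjunct2, THEN conjunct2, rule_format, OF i]
  show frame: "orthonormal3 (e1 i) (e2 i) (n (x0 i))" using chart by (simp add: orthonormal3_def)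
  show "C2_fun (\<phi> i)" "\<forall>u. norm (grad2 (\<phi> i) u) < 1/100" using chart by blast+
  fix y
  show "H y = 0 \<and> n y = (1 / norm (N y)) *\<^sub>R N y" if y: "y \<in> frontier \<Omega>" "y \<in> ball (x0 i) (3*d)"
  proof -
    obtain u where u: "y = x0 i + (u$1) *\<^sub>R e1 i + (u$2) *\<^sub>R e2 i - (\<phi> i u) *\<^sub>R n (x0 i)"
      using chart y by blast
    have n_y: "n y = (1 / sqrt (1 + (norm (grad2 (\<phi> i) u))\<^sup>2)) *\<^sub>R
               ((grad2 (\<phi> i) u $ 1) *\<^sub>R e1 i + (grad2 (\<phi> i) u $ 2) *\<^sub>R e2 i + n (x0 i))"
      using chart y u by auto
    have coord: "chart_coord (x0 i) (e1 i) (e2 i) y = u" using chart_coord_frame_point[OF frame] u by simp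
    have "norm (N y) = sqrt (1 + (norm (grad2 (\<phi> i) u))\<^sup>2)"
      using norm_chart_normal_sq[OF frame, of "x0 i" "\<phi> i" y] coord unfolding N_def
      by (metis norm_ge_zero real_sqrt_unique)
    then show ?thesis
      using n_y coord chart_height_frame_point[OF frame] u by (simp add: H_def N_def chart_normal_def)
  qed
  show "0 < H y" if "y \<in> \<Omega>" "y \<in> ball (x0 i) (3*d)"
  proof -
    have "y \<in> {x0 i + (u$1) *\<^sub>R e1 i + (u$2) *\<^sub>R e2 i - u3 *\<^sub>R n (x0 i) | u u3. \<phi> i u < u3}"
      using chart that by (elim conjE) blast
    then obtain u u3 where "y = x0 i + (u$1) *\<^sub>R e1 i + (u$2) *\<^sub>R e2 i - u3 *\<^sub>R n (x0 i)" "\<phi> i u < u3"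
      by blast
    then show ?thesis using chart_height_frame_point[OF frame] by (simp add: H_def)
  qed
qed

lemma billiard_setting_height_nonneg:
  assumes setting: "billiard_setting \<Omega> n d m1 x0 e1 e2 \<phi>" and i: "i < m1"
    and y: "y \<in> closure \<Omega>" "y \<in> ball (x0 i) (3*d)"
  shows "0 \<le> chart_height (x0 i) (e1 i) (e2 i) (n (x0 i)) (\<phi> i) y"
proof -
  let ?H = "chart_height (x0 i) (e1 i) (e2 i) (n (x0 i)) (\<phi> i)"
  have "closed {y. 0 \<le> ?H y}"
    by (intro closed_Collect_le continuous_on_const continuous_on_chart_height
        billiard_setting_chart(2)[OF setting i])
  moreover have "ball (x0 i) (3*d) \<inter> \<Omega> \<subseteq> {y. 0 \<le> ?H y}"
    using billiard_setting_chart(5)[OF setting i] by (auto intro: less_imp_le)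
  ultimately have "closure (ball (x0 i) (3*d) \<inter> \<Omega>) \<subseteq> {y. 0 \<le> ?H y}"
    by (rule closure_minimal[rotated])
  moreover have "ball (x0 i) (3*d) \<inter> closure \<Omega> \<subseteq> closure (ball (x0 i) (3*d) \<inter> \<Omega>)"
    by (rule open_Int_closure_subset) simp
  ultimately show ?thesis using y by blast
qed

lemma billiard_setting_unit_normal:
  assumes setting: "billiard_setting \<Omega> n d m1 x0 e1 e2 \<phi>" and y: "y \<in> frontier \<Omega>"
  shows "norm (n y) = 1"
proof -
  obtain j where j: "j < m1" "y \<in> ball (x0 j) (d/8)"
    using billiard_setting_basics(3)[OF setting] y by blast
  let ?N = "chart_normal (x0 j) (e1 j) (e2 j) (n (x0 j)) (\<phi> j)"
  have "y \<in> ball (x0 j) (3*d)" using j billiard_setting_basics(2)[OF setting] by auto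
  then have "n y = (1 / norm (?N y)) *\<^sub>R ?N y"
    using billiard_setting_chart(4)[OF setting j(1) y] by blast
  moreover have "1 \<le> norm (?N y)"
    using norm_chart_normal_bounds(1) billiard_setting_chart(1,3)[OF setting j(1)] by blast
  then have "?N y \<noteq> 0" by auto
  ultimately show ?thesis by simp
qed

section \<open>Billiard motion\<close>

lemma norm_reflection:
  fixes w m :: "'a::real_inner"
  assumes "norm m = 1"
  shows "norm (w - (2 * (w \<bullet> m)) *\<^sub>R m) = norm w"
proof -
  have "m \<bullet> m = 1" using assms by (simp add: norm_eq_1)
  then have "(norm (w - (2 * (w \<bullet> m)) *\<^sub>R m))^2 = (norm w)^2"
    unfolding power2_norm_eq_inner
    by (simp add: inner_diff_left inner_diff_right inner_commute[of m w] algebra_simps power2_eq_square)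
  then show ?thesis by (simp add: power2_eq_iff_nonneg)
qed

lemma reflection_along_normalized:
  fixes w v N m :: "'a::real_inner"
  assumes N: "1 \<le> norm N" and m: "m = (1 / norm N) *\<^sub>R N" and w: "0 \<le> w \<bullet> N"
  shows "(w - (2 * (w \<bullet> m)) *\<^sub>R m) \<bullet> N = - (w \<bullet> N)"
    and "norm (w - (2 * (w \<bullet> m)) *\<^sub>R m - v) \<le> norm (w - v) + 2 * (w \<bullet> N)"
proof -
  have pos: "0 < norm N" using N by linarith
  have wm: "w \<bullet> m = (w \<bullet> N) / norm N" using m by simp
  have "m \<bullet> N = norm N" using m pos by (simp add: dot_square_norm power2_eq_square)
  then show "(w - (2 * (w \<bullet> m)) *\<^sub>R m) \<bullet> N = - (w \<bullet> N)"
    using pos by (simp add: inner_diff_left wm)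
  have "norm (w - (2 * (w \<bullet> m)) *\<^sub>R m - v) \<le> norm (w - v) + norm ((2 * (w \<bullet> m)) *\<^sub>R m)"
    using norm_triangle_ineq4[of "w - v" "(2 * (w \<bullet> m)) *\<^sub>R m"] by (simp add: algebra_simps)
  also have "norm ((2 * (w \<bullet> m)) *\<^sub>R m) = 2 * ((w \<bullet> N) / norm N)" using m wm w pos by simp
  also have "(w \<bullet> N) / norm N \<le> w \<bullet> N" using w N by (simp add: divide_le_eq mult_le_cancel_left1)
  finally show "norm (w - (2 * (w \<bullet> m)) *\<^sub>R m - v) \<le> norm (w - v) + 2 * (w \<bullet> N)" by simp
qed

locale piecewise_motion =
  fixes X V :: "real \<Rightarrow> 'a::real_normed_vector" and B :: "real set"
  assumes B_pos: "B \<subseteq> {0<..}" and B_locally_finite: "\<And>T. finite (B \<inter> {..T})"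
    and V_const: "\<And>s t. 0 \<le> s \<Longrightarrow> s \<le> t \<Longrightarrow> B \<inter> {s<..t} = {} \<Longrightarrow> V t = V s"
    and X_cont: "continuous_on {0..} X"
    and X_right_deriv: "\<And>s. 0 \<le> s \<Longrightarrow> (X has_vector_derivative V s) (at s within {s..})"
begin

lemma B_isolated: "\<exists>\<delta>>0. \<forall>b\<in>B. b \<noteq> t \<longrightarrow> \<delta> \<le> \<bar>b - t\<bar>"
proof -
  obtain \<delta> where \<delta>: "0 < \<delta>" "\<forall>b\<in>B \<inter> {..t+1}. b \<noteq> t \<longrightarrow> \<delta> \<le> dist t b"
    using finite_set_avoid[OF B_locally_finite, of "t + 1" t] by blast
  have "min \<delta> 1 \<le> \<bar>b - t\<bar>" if "b \<in> B" "b \<noteq> t" for b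
  proof (cases "b \<le> t + 1")
    case True
    then have "\<delta> \<le> dist t b" using \<delta>(2) that by blast
    then show ?thesis by (simp add: dist_real_def abs_minus_commute)
  next
    case False
    then show ?thesis by simp
  qed
  then show ?thesis using \<delta>(1) by (intro exI[of _ "min \<delta> 1"]) auto
qed

lemma V_right_const:
  assumes "0 \<le> t"
  shows "\<exists>\<delta>>0. \<forall>s. t \<le> s \<and> s < t + \<delta> \<longrightarrow> V s = V t"
proof -
  obtain \<delta> where \<delta>: "0 < \<delta>" "\<And>b. b \<in> B \<Longrightarrow> b \<noteq> t \<Longrightarrow> \<delta> \<le> \<bar>b - t\<bar>"
    using B_isolated[of t] by blast
  have "V s = V t" if "t \<le> s" "s < t + \<delta>" for s
  proof (rule V_const[OF assms \<open>t \<le> s\<close>])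
    show "B \<inter> {t<..s} = {}"
    proof (rule ccontr)
      assume "B \<inter> {t<..s} \<noteq> {}"
      then obtain b where b: "b \<in> B" "t < b" "b \<le> s" by auto
      then have "\<delta> \<le> b - t" using \<delta>(2)[of b] by simp
      with b that show False by linarith
    qed
  qed
  with \<delta>(1) show ?thesis by blast
qed

lemma V_left_const:
  assumes "0 < t"
  shows "\<exists>\<delta>>0. \<delta> \<le> t \<and> (\<forall>s. t - \<delta> < s \<and> s < t \<longrightarrow> V s = V (t - \<delta>))
     \<and> (t \<notin> B \<longrightarrow> V t = V (t - \<delta>))"
proof -
  obtain \<delta> where \<delta>: "0 < \<delta>" "\<And>b. b \<in> B \<Longrightarrow> b \<noteq> t \<Longrightarrow> \<delta> \<le> \<bar>b - t\<bar>"
    using B_isolated[of t] by blast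
  define \<delta>' where "\<delta>' = min \<delta> t"
  have "V s = V (t - \<delta>')" if "t - \<delta>' < s" "s \<le> t" "s = t \<longrightarrow> t \<notin> B" for s
  proof (rule V_const)
    show "B \<inter> {t - \<delta>'<..s} = {}"
    proof (rule ccontr)
      assume "B \<inter> {t - \<delta>'<..s} \<noteq> {}"
      then obtain b where b: "b \<in> B" "t - \<delta>' < b" "b \<le> s" by auto
      with that have "b \<noteq> t" by auto
      then have "\<delta> \<le> \<bar>b - t\<bar>" using \<delta>(2) b(1) by simp
      with b that show False by (simp add: \<delta>'_def)
    qed
    show "0 \<le> t - \<delta>'" "t - \<delta>' \<le> s" using that by (auto simp: \<delta>'_def)
  qed
  then show ?thesis using \<delta>(1) assms by (intro exI[of _ \<delta>']) (auto simp: \<delta>'_def)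
qed

lemma V_left_limit:
  assumes "0 < t" "(V \<longlongrightarrow> w) (at_left t)"
  shows "\<exists>\<delta>>0. \<delta> \<le> t \<and> (\<forall>s. t - \<delta> < s \<and> s < t \<longrightarrow> V s = w)"
proof -
  obtain \<delta> where \<delta>: "0 < \<delta>" "\<delta> \<le> t" "\<forall>s. t - \<delta> < s \<and> s < t \<longrightarrow> V s = V (t - \<delta>)"
    using V_left_const[OF assms(1)] by blast
  have "eventually (\<lambda>s. s \<in> {t - \<delta><..<t}) (at_left t)"
    by (rule eventually_at_left_real) (use \<delta> in simp)
  then have "eventually (\<lambda>s. V s = V (t - \<delta>)) (at_left t)"
    by (rule eventually_mono) (use \<delta> in auto)
  then have "(V \<longlongrightarrow> V (t - \<delta>)) (at_left t)" by (rule tendsto_eventually)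
  with assms(2) have "w = V (t - \<delta>)" using tendsto_unique[OF trivial_limit_at_left_real] by blast
  with \<delta> show ?thesis by blast
qed

lemma has_real_derivative_comp_X:
  assumes "(F has_derivative D) (at (X t))" "0 \<le> t"
  shows "((\<lambda>s. F (X s)) has_real_derivative D (V t)) (at t within {t..})"
proof -
  have "((F \<circ> X) has_vector_derivative D (V t)) (at t within {t..})"
    using vector_derivative_diff_chain_within[OF X_right_deriv[OF assms(2)] has_derivative_subset[OF assms(1)]]
    by simp
  then show ?thesis by (simp add: o_def has_real_derivative_iff_has_vector_derivative)
qed

lemma displacement_le:
  assumes c: "\<And>s. 0 \<le> s \<Longrightarrow> norm (V s) \<le> c" and t: "0 \<le> t"
  shows "norm (X t - X 0) \<le> c * t"
proof -
  define f where "f s = norm (X s - X 0) - c * s" for s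
  have "f t \<le> f 0"
  proof (rule nonincreasing_by_right_slopes[OF t])
    fix s \<eta> :: real assume s: "0 \<le> s" "s < t" "0 < \<eta>"
    have "(X has_derivative (\<lambda>h. h *\<^sub>R V s)) (at s within {s..})"
      using X_right_deriv[OF s(1)] by (simp add: has_vector_derivative_def)
    then obtain \<delta> where \<delta>: "0 < \<delta>"
      "\<forall>y\<in>{s..}. norm (y - s) < \<delta> \<longrightarrow> norm (X y - X s - (y - s) *\<^sub>R V s) \<le> \<eta> * norm (y - s)"
      using s(3) unfolding has_derivative_within_alt by blast
    have "f s' \<le> f s + \<eta> * (s' - s)" if s': "s < s'" "s' < s + \<delta>" for s'
    proof -
      have "norm (X s' - X s - (s' - s) *\<^sub>R V s) \<le> \<eta> * (s' - s)"
        using \<delta>(2)[rule_format, of s'] s' by simp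
      then have "norm (X s' - X s) \<le> norm ((s' - s) *\<^sub>R V s) + \<eta> * (s' - s)"
        using norm_triangle_ineq2[of "X s' - X s" "(s' - s) *\<^sub>R V s"] by linarith
      also have "norm ((s' - s) *\<^sub>R V s) \<le> (s' - s) * c" using c[OF s(1)] s' by (simp add: mult_left_mono)
      finally have "norm (X s' - X s) \<le> (s' - s) * c + \<eta> * (s' - s)" by simp
      moreover have "norm (X s' - X 0) \<le> norm (X s - X 0) + norm (X s' - X s)"
        using norm_triangle_ineq[of "X s - X 0" "X s' - X s"] by simp
      ultimately show ?thesis by (simp add: f_def algebra_simps)
    qed
    with \<delta>(1) show "\<exists>\<delta>>0. \<forall>s'. s < s' \<and> s' < s + \<delta> \<longrightarrow> f s' \<le> f s + \<eta> * (s' - s)" by blast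
  next
    fix s \<eta> :: real assume s: "0 < s" "s \<le> t" "0 < \<eta>"
    obtain \<delta> where \<delta>: "0 < \<delta>" "\<forall>s'. s - \<delta> < s' \<and> s' < s \<longrightarrow> norm (X s' - X s) < \<eta>"
      using continuous_on_left_approx[OF continuous_on_subset[OF X_cont] s] by fastforce
    have "f s \<le> f s' + \<eta>" if "s - \<delta> < s'" "s' < s" for s'
    proof -
      have "norm (X s - X 0) \<le> norm (X s' - X 0) + norm (X s' - X s)"
        using norm_triangle_ineq[of "X s' - X 0" "X s - X s'"] by (simp add: norm_minus_commute)
      moreover have "0 \<le> c" using c[of 0] norm_ge_zero order_trans by blast
      then have "c * s' \<le> c * s" using that by (simp add: mult_left_mono)
      moreover have "norm (X s' - X s) < \<eta>" using \<delta>(2) that by blast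
      ultimately show ?thesis by (simp add: f_def)
    qed
    with \<delta>(1) show "\<exists>\<delta>>0. \<forall>s'. s - \<delta> < s' \<and> s' < s \<longrightarrow> f s \<le> f s' + \<eta>" by blast
  qed
  then show ?thesis by (simp add: f_def)
qed

end

locale billiard_motion = piecewise_motion X V B for X V :: "real \<Rightarrow> 'a::real_inner" and B +
  fixes \<Omega> :: "'a set" and n :: "'a \<Rightarrow> 'a"
  assumes in_closure: "\<And>s. 0 \<le> s \<Longrightarrow> X s \<in> closure \<Omega>"
    and rebound: "\<And>b. b \<in> B \<Longrightarrow> X b \<in> frontier \<Omega> \<and>
        (\<exists>w. (V \<longlongrightarrow> w) (at_left b) \<and> V b = w - (2 * (w \<bullet> n (X b))) *\<^sub>R n (X b))"
begin

lemma left_velocity_same_speed: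
  assumes unit: "\<And>y. y \<in> frontier \<Omega> \<Longrightarrow> norm (n y) = 1" and s: "0 < s"
  shows "\<exists>\<delta>>0. \<exists>w. (\<forall>s'. s - \<delta> < s' \<and> s' < s \<longrightarrow> V s' = w) \<and> norm (V s) = norm w"
proof (cases "s \<in> B")
  case True
  then obtain w where w: "(V \<longlongrightarrow> w) (at_left s)" "V s = w - (2 * (w \<bullet> n (X s))) *\<^sub>R n (X s)"
    "X s \<in> frontier \<Omega>" using rebound by blast
  obtain \<delta> where "0 < \<delta>" "\<forall>s'. s - \<delta> < s' \<and> s' < s \<longrightarrow> V s' = w"
    using V_left_limit[OF s w(1)] by blast
  moreover have "norm (V s) = norm w" using w(2) norm_reflection[OF unit[OF w(3)]] by simp
  ultimately show ?thesis by blast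
next
  case False
  then obtain \<delta> where \<delta>: "0 < \<delta>" "\<forall>s'. s - \<delta> < s' \<and> s' < s \<longrightarrow> V s' = V (s - \<delta>)"
    "V s = V (s - \<delta>)"
    using V_left_const[OF s] by blast
  from \<delta>(3) have "norm (V s) = norm (V (s - \<delta>))" by (rule arg_cong)
  with \<delta>(1,2) show ?thesis by blast
qed

lemma speed_const:
  assumes unit: "\<And>y. y \<in> frontier \<Omega> \<Longrightarrow> norm (n y) = 1" and t: "0 \<le> t"
  shows "norm (V t) = norm (V 0)"
proof -
  define f where "f s = \<bar>norm (V s) - norm (V 0)\<bar>" for s
  have "f t \<le> f 0"
  proof (rule nonincreasing_by_right_slopes[OF t])
    fix s \<eta> :: real assume s: "0 \<le> s" "s < t" "0 < \<eta>"
    then obtain \<delta> where \<delta>: "0 < \<delta>" "\<forall>s'. s \<le> s' \<and> s' < s + \<delta> \<longrightarrow> V s' = V s"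
      using V_right_const by blast
    have "f s' \<le> f s + \<eta> * (s' - s)" if "s < s'" "s' < s + \<delta>" for s'
    proof -
      have "V s' = V s" using \<delta>(2)[rule_format, of s'] that by simp
      then show ?thesis using s(3) that by (simp add: f_def)
    qed
    with \<delta>(1) show "\<exists>\<delta>>0. \<forall>s'. s < s' \<and> s' < s + \<delta> \<longrightarrow> f s' \<le> f s + \<eta> * (s' - s)" by blast
  next
    fix s \<eta> :: real assume s: "0 < s" "s \<le> t" "0 < \<eta>"
    then obtain \<delta> w where \<delta>: "0 < \<delta>" "\<forall>s'. s - \<delta> < s' \<and> s' < s \<longrightarrow> V s' = w"
      and "norm (V s) = norm w" using left_velocity_same_speed[OF unit] by blast
    have "f s \<le> f s' + \<eta>" if "s - \<delta> < s'" "s' < s" for s'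
    proof -
      have "V s' = w" using \<delta>(2) that by blast
      then show ?thesis using \<open>norm (V s) = norm w\<close> s(3) by (simp add: f_def)
    qed
    with \<delta>(1) show "\<exists>\<delta>>0. \<forall>s'. s - \<delta> < s' \<and> s' < s \<longrightarrow> f s \<le> f s' + \<eta>" by blast
  qed
  then show ?thesis by (simp add: f_def)
qed

lemma V_const_inside:
  assumes "open \<Omega>" "\<forall>s\<in>{0..\<tau>}. X s \<in> \<Omega>" "0 \<le> s" "s \<le> \<tau>"
  shows "V s = V 0"
proof (rule V_const[of 0 s])
  show "B \<inter> {0<..s} = {}"
  proof (rule ccontr)
    assume "B \<inter> {0<..s} \<noteq> {}"
    then obtain b where "b \<in> B" "0 < b" "b \<le> s" by auto
    then have "X b \<in> frontier \<Omega>" "X b \<in> \<Omega>" using rebound assms by auto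
    then show False using \<open>open \<Omega>\<close> by (simp add: frontier_def interior_open)
  qed
qed (use assms in auto)

end

lemma billiard_traj_motion:
  assumes traj: "billiard_traj \<Omega> n x v X V"
  obtains B where "billiard_motion X V B \<Omega> n" "X 0 = x" "V 0 = v"
proof -
  obtain B where B: "B \<subseteq> {0<..}" "\<forall>T. finite (B \<inter> {..T})"
      "\<forall>s t. 0 \<le> s \<and> s \<le> t \<and> B \<inter> {s<..t} = {} \<longrightarrow> V t = V s"
      "\<forall>b\<in>B. X b \<in> frontier \<Omega> \<and>
         (\<exists>w. (V \<longlongrightarrow> w) (at_left b) \<and> V b = w - (2 * (w \<bullet> n (X b))) *\<^sub>R n (X b))"
    using traj unfolding billiard_traj_def by blast
  have "billiard_motion X V B \<Omega> n"
  proof unfold_locales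
    show "B \<subseteq> {0<..}" by (rule B(1))
    show "\<And>T. finite (B \<inter> {..T})" using B(2) by blast
    show "\<And>s t. 0 \<le> s \<Longrightarrow> s \<le> t \<Longrightarrow> B \<inter> {s<..t} = {} \<Longrightarrow> V t = V s" using B(3) by blast
    show "\<And>b. b \<in> B \<Longrightarrow> X b \<in> frontier \<Omega> \<and>
        (\<exists>w. (V \<longlongrightarrow> w) (at_left b) \<and> V b = w - (2 * (w \<bullet> n (X b))) *\<^sub>R n (X b))"
      using B(4) by blast
    show "continuous_on {0..} X" "\<And>s. 0 \<le> s \<Longrightarrow> (X has_vector_derivative V s) (at s within {s..})"
      "\<And>s. 0 \<le> s \<Longrightarrow> X s \<in> closure \<Omega>"
      using traj unfolding billiard_traj_def by blast+
  qed
  moreover have "X 0 = x" "V 0 = v" using traj unfolding billiard_traj_def by blast+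
  ultimately show thesis by (rule that)
qed

section \<open>Motion inside a chart\<close>

locale chart_motion = billiard_motion X V B \<Omega> n for X V :: "real \<Rightarrow> real^3" and B \<Omega> n +
  fixes d :: real and m1 :: nat and x0 e1 e2 :: "nat \<Rightarrow> real^3" and \<phi> :: "nat \<Rightarrow> real^2 \<Rightarrow> real"
    and i :: nat and vM M :: real
  assumes setting: "billiard_setting \<Omega> n d m1 x0 e1 e2 \<phi>" and chart_index: "i < m1"
    and speed_le: "norm (V 0) \<le> vM" and vM_pos: "0 < vM"
    and start: "X 0 \<in> ball (x0 i) d"
    and M_nonneg: "0 \<le> M"
    and second_deriv_le: "\<And>k u. norm u \<le> 4 * d \<Longrightarrow> norm (grad2 (\<lambda>w. grad2 (\<phi> i) w $ k) u) \<le> M"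
begin

abbreviation "H \<equiv> chart_height (x0 i) (e1 i) (e2 i) (n (x0 i)) (\<phi> i)"
abbreviation "N \<equiv> chart_normal (x0 i) (e1 i) (e2 i) (n (x0 i)) (\<phi> i)"

definition "K = 4 * M * vM^2 + 1"

lemma K_ge_1: "1 \<le> K"
  using M_nonneg by (simp add: K_def)

lemma frame: "orthonormal3 (e1 i) (e2 i) (n (x0 i))"
  and phi_C2: "C2_fun (\<phi> i)" and grad_small: "\<forall>u. norm (grad2 (\<phi> i) u) < 1/100"
  using billiard_setting_chart(1-3)[OF setting chart_index] by blast+

lemma norm_N_ge_1: "1 \<le> norm (N y)"
  using norm_chart_normal_bounds(1)[OF frame] grad_small by blast

lemma speed_eq: "0 \<le> t \<Longrightarrow> norm (V t) = norm (V 0)"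
  using speed_const billiard_setting_unit_normal[OF setting] by blast

lemma X_in_inner_chart:
  assumes "0 \<le> t" "t \<le> d / vM"
  shows "X t \<in> ball (x0 i) (2 * d)"
proof -
  have "norm (V s) \<le> norm (V 0)" if "0 \<le> s" for s using speed_eq[OF that] by simp
  then have "norm (X t - X 0) \<le> norm (V 0) * t" by (rule displacement_le[OF _ assms(1)])
  also have "\<dots> \<le> vM * (d / vM)" using speed_le vM_pos assms by (intro mult_mono) auto
  finally have "dist (X 0) (X t) \<le> d" using vM_pos by (simp add: dist_norm norm_minus_commute)
  then show ?thesis using start dist_triangle[of "x0 i" "X t" "X 0"] by auto
qed

lemma X_in_chart:
  assumes "0 \<le> t" "t \<le> d / vM"
  shows "X t \<in> ball (x0 i) (3 * d)"
  using X_in_inner_chart[OF assms] billiard_setting_basics(2)[OF setting] by auto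

lemma inner_normal_right_derivative:
  assumes "0 \<le> t" "t \<le> d / vM" "norm c \<le> vM"
  obtains r where "((\<lambda>s. c \<bullet> N (X s)) has_real_derivative r) (at t within {t..})" "\<bar>r\<bar> \<le> K - 1"
proof -
  let ?U = "chart_coord (x0 i) (e1 i) (e2 i) (X t)"
  let ?m = "norm (grad2 (\<lambda>w. grad2 (\<phi> i) w $ 1) ?U) + norm (grad2 (\<lambda>w. grad2 (\<phi> i) w $ 2) ?U)"
  have e: "norm (e1 i) = 1" "norm (e2 i) = 1" using frame by (auto simp: orthonormal3_def)
  obtain D where D: "((\<lambda>y. c \<bullet> N y) has_derivative D) (at (X t))"
    "\<And>h. \<bar>D h\<bar> \<le> 2 * ?m * norm c * norm h"
    using has_derivative_inner_chart_normal[OF C2_funD(2)[OF phi_C2] C2_funD(2)[OF phi_C2] e] by blast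
  have "norm ?U \<le> 4 * d"
    using norm_chart_coord_le[OF e, of "x0 i" "X t"] X_in_inner_chart[OF assms(1,2)]
    by (simp add: dist_norm norm_minus_commute)
  then have "?m \<le> 2 * M" using second_deriv_le[of ?U 1] second_deriv_le[of ?U 2] by simp
  moreover have "norm (V t) \<le> vM" using speed_eq[OF assms(1)] speed_le by simp
  ultimately have "2 * ?m * norm c * norm (V t) \<le> 2 * (2 * M) * vM * vM"
    using assms(3) M_nonneg vM_pos by (intro mult_mono) auto
  moreover have "2 * (2 * M) * vM * vM = K - 1" by (simp add: K_def power2_eq_square)
  ultimately have "\<bar>D (V t)\<bar> \<le> K - 1" using D(2)[of "V t"] by linarith
  with has_real_derivative_comp_X[OF D(1) assms(1)] show thesis by (rule that)
qed

lemma height_right_derivative: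
  "0 \<le> t \<Longrightarrow> ((\<lambda>s. H (X s)) has_real_derivative - (V t \<bullet> N (X t))) (at t within {t..})"
  using has_real_derivative_comp_X[OF has_derivative_chart_height[OF C2_funD(1)[OF phi_C2]]] by simp

lemma continuous_inner_normal: "continuous_on {0..} (\<lambda>s. c \<bullet> N (X s))"
  by (intro continuous_on_inner continuous_on_const
      continuous_on_compose2[OF continuous_on_chart_normal[OF phi_C2] X_cont]) auto

lemma continuous_height: "continuous_on {0..} (\<lambda>s. H (X s))"
  by (rule continuous_on_compose2[OF continuous_on_chart_height[OF phi_C2] X_cont]) auto

lemma height_frontier:
  assumes "0 \<le> t" "t \<le> d / vM" "X t \<in> frontier \<Omega>"
  shows "H (X t) = 0" "n (X t) = (1 / norm (N (X t))) *\<^sub>R N (X t)"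
  using billiard_setting_chart(4)[OF setting chart_index assms(3) X_in_chart[OF assms(1,2)]] by auto

lemma height_nonneg:
  assumes "0 \<le> t" "t \<le> d / vM"
  shows "0 \<le> H (X t)"
  by (rule billiard_setting_height_nonneg[OF setting chart_index in_closure X_in_chart])
    (use assms in auto)

text \<open>If the incoming velocity pointed inwards, \<open>H (X s)\<close> would increase just before the
  rebound, contradicting \<open>H = 0\<close> on the boundary and \<open>H \<ge> 0\<close> on the closure.\<close>
lemma incoming_velocity_outward:
  assumes b: "b \<in> B" "b \<le> d / vM" and w: "(V \<longlongrightarrow> w) (at_left b)"
  shows "0 \<le> w \<bullet> N (X b)"
proof (rule ccontr)
  define c where "c = - (w \<bullet> N (X b))"
  assume "\<not> 0 \<le> w \<bullet> N (X b)"
  then have c: "0 < c" by (simp add: c_def)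
  have "0 < b" using B_pos b(1) by auto
  obtain \<delta>1 where \<delta>1: "0 < \<delta>1" "\<delta>1 \<le> b" "\<forall>s. b - \<delta>1 < s \<and> s < b \<longrightarrow> V s = w"
    using V_left_limit[OF \<open>0 < b\<close> w] by blast
  obtain \<delta>2 where \<delta>2: "0 < \<delta>2" "\<forall>s. b - \<delta>2 < s \<and> s < b \<longrightarrow> norm (w \<bullet> N (X s) - w \<bullet> N (X b)) < c/2"
    using continuous_on_left_approx[OF continuous_on_subset[OF continuous_inner_normal]
        \<open>0 < b\<close> order_refl, of "c/2"] c by fastforce
  define a where "a = b - min \<delta>1 \<delta>2 / 2"
  have a: "0 \<le> a" "a < b" "b - \<delta>1 < a" "b - \<delta>2 < a" using \<delta>1 \<delta>2 by (auto simp: a_def)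
  have "- H (X b) + c/2 * b \<le> - H (X a) + c/2 * a"
  proof (rule nonincreasing_by_right_derivative[where f = "\<lambda>s. - H (X s) + c/2 * s"])
    show "a \<le> b" using a by simp
    show "continuous_on {a..b} (\<lambda>s. - H (X s) + c/2 * s)"
      using a(1) by (intro continuous_intros continuous_on_subset[OF continuous_height]) auto
    fix s assume s: "a \<le> s" "s < b"
    have "V s = w" using \<delta>1(3) a s by auto
    moreover have "w \<bullet> N (X s) < - c/2"
      using \<delta>2(2)[rule_format, of s] a s by (auto simp: c_def)
    moreover have "((\<lambda>s. - H (X s) + c/2 * s) has_real_derivative V s \<bullet> N (X s) + c/2) (at s within {s..})"
      using height_right_derivative[of s] a s by (auto intro!: derivative_eq_intros)
    ultimately show "\<exists>r\<le>0. ((\<lambda>s. - H (X s) + c/2 * s) has_real_derivative r) (at s within {s..})"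
      by (intro exI[of _ "V s \<bullet> N (X s) + c/2"]) auto
  qed
  moreover have "H (X b) = 0" using height_frontier(1)[of b] b rebound[OF b(1)] \<open>0 < b\<close> by auto
  moreover have "0 \<le> H (X a)" using height_nonneg[of a] a b by auto
  ultimately have "c/2 * b \<le> c/2 * a" by simp
  then show False using a c by simp
qed

definition potential :: "real \<Rightarrow> real" where
  "potential s = norm (V s - V 0) + 2 * max (V s \<bullet> N (X s)) 0 - 2 * K * s"

lemma potential_right_slope:
  assumes s: "0 \<le> s" "s < d / vM" and \<eta>: "0 < \<eta>"
  shows "\<exists>\<delta>>0. \<forall>s'. s < s' \<and> s' < s + \<delta> \<longrightarrow> potential s' \<le> potential s + \<eta> * (s' - s)"
proof -
  obtain \<delta>1 where \<delta>1: "0 < \<delta>1" "\<forall>s'. s \<le> s' \<and> s' < s + \<delta>1 \<longrightarrow> V s' = V s"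
    using V_right_const[OF s(1)] by blast
  have "norm (V s) \<le> vM" using speed_eq[OF s(1)] speed_le by simp
  moreover have "s \<le> d / vM" using s(2) by simp
  ultimately obtain r where r: "((\<lambda>s'. V s \<bullet> N (X s')) has_real_derivative r) (at s within {s..})"
    "\<bar>r\<bar> \<le> K - 1"
    using inner_normal_right_derivative[OF s(1)] by blast
  obtain \<delta>2 where \<delta>2: "0 < \<delta>2" "\<forall>s'. s < s' \<and> s' < s + \<delta>2 \<longrightarrow>
      \<bar>V s \<bullet> N (X s') - V s \<bullet> N (X s) - r * (s' - s)\<bar> \<le> \<eta> / 2 * (s' - s)"
    using has_real_derivative_right_estimate[OF r(1), of "\<eta> / 2"] \<eta> by auto
  have "potential s' \<le> potential s + \<eta> * (s' - s)" if s': "s < s'" "s' < s + min \<delta>1 \<delta>2" for s'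
  proof -
    have "V s' = V s" using \<delta>1(2)[rule_format, of s'] s' by simp
    have "\<bar>r * (s' - s)\<bar> \<le> (K - 1) * (s' - s)"
      using r(2) s' by (simp add: abs_mult mult_right_mono)
    moreover have "\<bar>V s \<bullet> N (X s') - V s \<bullet> N (X s) - r * (s' - s)\<bar> \<le> \<eta> / 2 * (s' - s)"
      using \<delta>2(2) s' by simp
    ultimately have "V s \<bullet> N (X s') \<le> V s \<bullet> N (X s) + (K - 1) * (s' - s) + \<eta> / 2 * (s' - s)"
      by linarith
    moreover have "0 \<le> (K - 1) * (s' - s) + \<eta> / 2 * (s' - s)" using K_ge_1 \<eta> s' by simp
    ultimately have "max (V s \<bullet> N (X s')) 0 \<le> max (V s \<bullet> N (X s)) 0 + (K - 1) * (s' - s) + \<eta> / 2 * (s' - s)"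
      by (auto simp: max_def)
    moreover have "(K - 1) * (s' - s) = K * s' - K * s - (s' - s)" "\<eta> / 2 * (s' - s) = \<eta> * (s' - s) / 2"
      by (simp_all add: algebra_simps)
    ultimately show ?thesis using s' unfolding potential_def \<open>V s' = V s\<close> by linarith
  qed
  then show ?thesis using \<delta>1(1) \<delta>2(1) by (intro exI[of _ "min \<delta>1 \<delta>2"]) auto
qed

lemma potential_jump_le:
  assumes s: "0 < s" "s \<le> d / vM"
  shows "\<exists>\<delta>>0. \<exists>w. (\<forall>s'. s - \<delta> < s' \<and> s' < s \<longrightarrow> V s' = w) \<and>
    norm (V s - V 0) + 2 * max (V s \<bullet> N (X s)) 0 \<le> norm (w - V 0) + 2 * max (w \<bullet> N (X s)) 0"
proof (cases "s \<in> B")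
  case True
  then obtain w where w: "(V \<longlongrightarrow> w) (at_left s)" "V s = w - (2 * (w \<bullet> n (X s))) *\<^sub>R n (X s)"
    "X s \<in> frontier \<Omega>" using rebound by blast
  have outward: "0 \<le> w \<bullet> N (X s)" by (rule incoming_velocity_outward[OF True s(2) w(1)])
  have "n (X s) = (1 / norm (N (X s))) *\<^sub>R N (X s)" using height_frontier(2) s w(3) by simp
  note reflection = reflection_along_normalized[OF norm_N_ge_1 this outward]
  have "V s \<bullet> N (X s) = - (w \<bullet> N (X s))" using reflection(1) w(2) by simp
  moreover have "norm (V s - V 0) \<le> norm (w - V 0) + 2 * (w \<bullet> N (X s))"
    using reflection(2)[of "V 0"] w(2) by simp
  moreover obtain \<delta> where "0 < \<delta>" "\<forall>s'. s - \<delta> < s' \<and> s' < s \<longrightarrow> V s' = w"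
    using V_left_limit[OF s(1) w(1)] by blast
  ultimately show ?thesis using outward by (intro exI[of _ \<delta>] exI[of _ w]) auto
next
  case False
  then obtain \<delta> where \<delta>: "0 < \<delta>" "\<forall>s'. s - \<delta> < s' \<and> s' < s \<longrightarrow> V s' = V (s - \<delta>)"
    and "V s = V (s - \<delta>)"
    using V_left_const[OF s(1)] by blast
  have "norm (V s - V 0) + 2 * max (V s \<bullet> N (X s)) 0
      \<le> norm (V (s - \<delta>) - V 0) + 2 * max (V (s - \<delta>) \<bullet> N (X s)) 0"
    using \<open>V s = V (s - \<delta>)\<close> by simp
  with \<delta> show ?thesis by blast
qed

lemma potential_left_no_jump_up:
  assumes s: "0 < s" "s \<le> d / vM" and \<eta>: "0 < \<eta>"
  shows "\<exists>\<delta>>0. \<forall>s'. s - \<delta> < s' \<and> s' < s \<longrightarrow> potential s \<le> potential s' + \<eta>"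
proof -
  obtain \<delta>1 w where \<delta>1: "0 < \<delta>1" "\<forall>s'. s - \<delta>1 < s' \<and> s' < s \<longrightarrow> V s' = w"
    and jump: "norm (V s - V 0) + 2 * max (V s \<bullet> N (X s)) 0 \<le> norm (w - V 0) + 2 * max (w \<bullet> N (X s)) 0"
    using potential_jump_le[OF s] by blast
  obtain \<delta>2 where \<delta>2: "0 < \<delta>2" "\<forall>s'. s - \<delta>2 < s' \<and> s' < s \<longrightarrow> norm (w \<bullet> N (X s') - w \<bullet> N (X s)) < \<eta> / 2"
    using continuous_on_left_approx[OF continuous_on_subset[OF continuous_inner_normal] s(1) order_refl,
        of "\<eta> / 2"] \<eta> by fastforce
  have "potential s \<le> potential s' + \<eta>" if s': "s - min \<delta>1 \<delta>2 < s'" "s' < s" for s'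
  proof -
    have "V s' = w" using \<delta>1(2)[rule_format, of s'] s' by simp
    have "\<bar>w \<bullet> N (X s') - w \<bullet> N (X s)\<bar> < \<eta> / 2" using \<delta>2(2) s' by simp
    then have "w \<bullet> N (X s) < w \<bullet> N (X s') + \<eta> / 2" by linarith
    then have "max (w \<bullet> N (X s)) 0 \<le> max (w \<bullet> N (X s')) 0 + \<eta> / 2"
      using \<eta> by (auto simp: max_def)
    moreover have "K * s' \<le> K * s" using s' K_ge_1 by (intro mult_left_mono) auto
    ultimately show ?thesis using jump unfolding potential_def \<open>V s' = w\<close> by linarith
  qed
  then show ?thesis using \<delta>1(1) \<delta>2(1) by (intro exI[of _ "min \<delta>1 \<delta>2"]) auto
qed

lemma potential_nonincreasing:
  assumes "0 \<le> t" "t \<le> d / vM"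
  shows "potential t \<le> potential 0"
proof (rule nonincreasing_by_right_slopes[OF assms(1)])
  show "\<exists>\<delta>>0. \<forall>s'. s < s' \<and> s' < s + \<delta> \<longrightarrow> potential s' \<le> potential s + \<eta> * (s' - s)"
    if "0 \<le> s" "s < t" "0 < \<eta>" for s \<eta>
    using potential_right_slope that assms(2) by simp
  show "\<exists>\<delta>>0. \<forall>s'. s - \<delta> < s' \<and> s' < s \<longrightarrow> potential s \<le> potential s' + \<eta>"
    if "0 < s" "s \<le> t" "0 < \<eta>" for s \<eta>
    using potential_left_no_jump_up that assms(2) by simp
qed

lemma inner_normal_lower_bound:
  assumes c: "norm c \<le> vM" and s: "0 \<le> s" "s \<le> d / vM"
  shows "c \<bullet> N (X 0) - K * s \<le> c \<bullet> N (X s)"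
proof -
  have "- (c \<bullet> N (X s)) - K * s \<le> - (c \<bullet> N (X 0)) - K * 0"
  proof (rule nonincreasing_by_right_derivative[where f = "\<lambda>u. - (c \<bullet> N (X u)) - K * u", OF s(1)])
    show "continuous_on {0..s} (\<lambda>u. - (c \<bullet> N (X u)) - K * u)"
      by (intro continuous_intros continuous_on_subset[OF continuous_inner_normal]) auto
    fix u assume u: "0 \<le> u" "u < s"
    have "u \<le> d / vM" using u s by simp
    then obtain r where r: "((\<lambda>s. c \<bullet> N (X s)) has_real_derivative r) (at u within {u..})" "\<bar>r\<bar> \<le> K - 1"
      using inner_normal_right_derivative[OF u(1) _ c] by blast
    have "((\<lambda>u. - (c \<bullet> N (X u)) - K * u) has_real_derivative - r - K) (at u within {u..})"
      using r(1) by (auto intro!: derivative_eq_intros)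
    then show "\<exists>r\<le>0. ((\<lambda>u. - (c \<bullet> N (X u)) - K * u) has_real_derivative r) (at u within {u..})"
      using r(2) by (intro exI[of _ "- r - K"]) auto
  qed
  then show ?thesis by simp
qed

lemma initial_inner_normal_bound:
  assumes \<tau>: "0 < \<tau>" "\<tau> \<le> d / vM" and inside: "\<forall>s\<in>{0..\<tau>}. X s \<in> \<Omega>"
  shows "V 0 \<bullet> N (X 0) * \<tau> \<le> H (X 0) - H (X \<tau>) + K * \<tau>^2 / 2"
proof -
  let ?q = "V 0 \<bullet> N (X 0)"
  have "H (X \<tau>) + ?q * \<tau> - K * \<tau>^2 / 2 \<le> H (X 0) + ?q * 0 - K * 0^2 / 2"
  proof (rule nonincreasing_by_right_derivative[where f = "\<lambda>u. H (X u) + ?q * u - K * u^2 / 2"])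
    show "0 \<le> \<tau>" using \<tau> by simp
    show "continuous_on {0..\<tau>} (\<lambda>u. H (X u) + ?q * u - K * u^2 / 2)"
      by (intro continuous_intros continuous_on_subset[OF continuous_height]) auto
    fix u assume u: "0 \<le> u" "u < \<tau>"
    have "V u = V 0" using V_const_inside[OF billiard_setting_basics(1)[OF setting] inside u(1)] u by simp
    moreover have "?q - K * u \<le> V 0 \<bullet> N (X u)"
      using inner_normal_lower_bound[OF speed_le u(1)] u \<tau> by simp
    moreover have "((\<lambda>u. H (X u) + ?q * u - K * u^2 / 2) has_real_derivative
        - (V u \<bullet> N (X u)) + ?q - K * u) (at u within {u..})"
      using height_right_derivative[OF u(1)] by (auto intro!: derivative_eq_intros)
    ultimately show "\<exists>r\<le>0. ((\<lambda>u. H (X u) + ?q * u - K * u^2 / 2) has_real_derivative r) (at u within {u..})"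
      by (intro exI[of _ "- (V u \<bullet> N (X u)) + ?q - K * u"]) auto
  qed
  then show ?thesis by simp
qed

lemma height_start_lt:
  assumes layer: "X 0 \<in> Omega_layer \<Omega> l" and "l \<le> d"
  shows "H (X 0) < 2 * l"
proof -
  have "frontier \<Omega> \<noteq> {}" using billiard_setting_basics(4)[OF setting chart_index] by blast
  then obtain z where z: "z \<in> frontier \<Omega>" "infdist (X 0) (frontier \<Omega>) = dist (X 0) z"
    using infdist_attains_inf[OF frontier_closed] by blast
  then have "dist (X 0) z < l" using layer by (simp add: Omega_layer_def)
  then have "z \<in> ball (x0 i) (3 * d)"
    using start \<open>l \<le> d\<close> billiard_setting_basics(2)[OF setting] dist_triangle[of "x0 i" z "X 0"] by auto
  then have "H z = 0" using billiard_setting_chart(4)[OF setting chart_index z(1)] by blast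
  moreover have "\<bar>H (X 0) - H z\<bar> \<le> 2 * norm (X 0 - z)"
    by (rule chart_height_lipschitz[OF frame phi_C2 grad_small])
  ultimately show ?thesis using \<open>dist (X 0) z < l\<close> by (simp add: dist_norm)
qed

lemma velocity_deviation_bound:
  assumes \<tau>: "0 < \<tau>" "\<tau> \<le> d / vM" and inside: "\<forall>s\<in>{0..\<tau>}. X s \<in> \<Omega>"
    and layer: "X 0 \<in> Omega_layer \<Omega> l" "l \<le> d" and s: "0 \<le> s" "s \<le> d / vM"
  shows "norm (V s - V 0) \<le> 4 * l / \<tau> + K * \<tau> + 2 * K * s"
proof -
  let ?q = "V 0 \<bullet> N (X 0)"
  have "0 < H (X \<tau>)"
    using billiard_setting_chart(5)[OF setting chart_index] inside X_in_chart[of \<tau>] \<tau> by simp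
  then have "?q * \<tau> \<le> 2 * l + K * \<tau>^2 / 2"
    using initial_inner_normal_bound[OF \<tau> inside] height_start_lt[OF layer] by linarith
  then have "?q \<le> 2 * l / \<tau> + K * \<tau> / 2" using \<tau>(1) by (simp add: field_simps power2_eq_square)
  moreover have "0 \<le> l"
    using layer(1) infdist_nonneg[of "X 0" "frontier \<Omega>"] by (simp add: Omega_layer_def)
  then have "0 \<le> 2 * l / \<tau> + K * \<tau> / 2" using \<tau>(1) K_ge_1 by simp
  ultimately have "potential 0 \<le> 4 * l / \<tau> + K * \<tau>" by (simp add: potential_def)
  moreover have "norm (V s - V 0) - 2 * K * s \<le> potential s" by (simp add: potential_def)
  ultimately show ?thesis using potential_nonincreasing[OF s] by linarith
qed

end

lemma billiard_traj_velocity_deviation: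
  assumes setting: "billiard_setting \<Omega> n d m1 x0 e1 e2 \<phi>" and i: "i < m1"
    and traj: "billiard_traj \<Omega> n x v X V" and x: "x \<in> ball (x0 i) d"
    and v: "norm v \<le> vM" "0 < vM"
    and M: "0 \<le> M" "\<And>k u. norm u \<le> 4 * d \<Longrightarrow> norm (grad2 (\<lambda>w. grad2 (\<phi> i) w $ k) u) \<le> M"
    and \<tau>: "0 < \<tau>" "\<tau> \<le> d / vM" and layer: "\<forall>s\<in>{0..\<tau>}. X s \<in> Omega_layer \<Omega> l" "l \<le> d"
    and s: "0 \<le> s" "s \<le> d / vM"
  shows "norm (V s - v) \<le> 4 * l / \<tau> + (4 * M * vM^2 + 1) * (\<tau> + 2 * s)"
proof -
  obtain B where B: "billiard_motion X V B \<Omega> n" "X 0 = x" "V 0 = v"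
    by (rule billiard_traj_motion[OF traj])
  then interpret chart_motion X V B \<Omega> n d m1 x0 e1 e2 \<phi> i vM M
    by (intro chart_motion.intro chart_motion_axioms.intro B(1) setting i M v) (use x v in auto)
  have "norm (V s - V 0) \<le> 4 * l / \<tau> + K * \<tau> + 2 * K * s"
    using velocity_deviation_bound[OF \<tau> _ _ layer(2) s] layer(1) \<tau> by (auto simp: Omega_layer_def)
  then show ?thesis using B(3) by (simp add: K_def algebra_simps)
qed

theorem lemma2p7:
  fixes \<Omega> :: "(real^3) set" and n :: "real^3 \<Rightarrow> real^3" and d :: real and m1 :: nat
    and x0 e1 e2 :: "nat \<Rightarrow> real^3" and \<phi> :: "nat \<Rightarrow> real^2 \<Rightarrow> real"
    and vM \<epsilon> :: real
  assumes "billiard_setting \<Omega> n d m1 x0 e1 e2 \<phi>"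
    and "vM > 0" and "\<epsilon> > 0"
  shows "\<exists>t\<epsilon> > 0. \<forall>\<tau>2. 0 < \<tau>2 \<and> \<tau>2 \<le> t\<epsilon> \<longrightarrow>
           (\<exists>l > 0. \<forall>i<m1. \<forall>x v. x \<in> ball (x0 i) d \<and> v \<in> cball 0 vM \<longrightarrow>
              (\<forall>X V. billiard_traj \<Omega> n x v X V \<longrightarrow>
                 (\<forall>s\<in>{0..\<tau>2}. X s \<in> Omega_layer \<Omega> l \<inter> ball (x0 i) d) \<longrightarrow>
                 (\<forall>s\<in>{0..t\<epsilon>}. norm (V s - v) < \<epsilon>)))"
proof -
  obtain M where M: "0 \<le> M"
    "\<And>i k u. i < m1 \<Longrightarrow> norm u \<le> 4 * d \<Longrightarrow> norm (grad2 (\<lambda>w. grad2 (\<phi> i) w $ k) u) \<le> M"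
    using uniform_second_derivative_bound billiard_setting_chart(2)[OF assms(1)] by metis
  define K where "K = 4 * M * vM^2 + 1"
  define t\<epsilon> where "t\<epsilon> = min (d / vM) (\<epsilon> / (8 * K))"
  have K: "1 \<le> K" using M(1) by (simp add: K_def)
  have "0 < t\<epsilon>" using billiard_setting_basics(2)[OF assms(1)] assms(2,3) K by (simp add: t\<epsilon>_def)
  have Kt: "K * t \<le> \<epsilon> / 8" if "t \<le> t\<epsilon>" for t
  proof -
    have "K * t \<le> K * (\<epsilon> / (8 * K))" using that K by (intro mult_left_mono) (auto simp: t\<epsilon>_def)
    also have "\<dots> = \<epsilon> / 8" using K by simp
    finally show ?thesis .
  qed
  show ?thesis
  proof (rule exI[of _ t\<epsilon>], intro conjI \<open>0 < t\<epsilon>\<close> allI impI)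
    fix \<tau>2 :: real assume \<tau>2: "0 < \<tau>2 \<and> \<tau>2 \<le> t\<epsilon>"
    define l where "l = min d (\<epsilon> * \<tau>2 / 32)"
    have "0 < l" using billiard_setting_basics(2)[OF assms(1)] assms(3) \<tau>2 by (simp add: l_def)
    moreover have "norm (V s - v) < \<epsilon>"
      if i: "i < m1" and x: "x \<in> ball (x0 i) d" and v: "v \<in> cball 0 vM"
        and traj: "billiard_traj \<Omega> n x v X V"
        and layer: "\<forall>s\<in>{0..\<tau>2}. X s \<in> Omega_layer \<Omega> l \<inter> ball (x0 i) d"
        and s: "s \<in> {0..t\<epsilon>}" for i x v X V s
    proof -
      have "norm (V s - v) \<le> 4 * l / \<tau>2 + K * \<tau>2 + 2 * K * s"
        using billiard_traj_velocity_deviation[OF assms(1) i traj x _ assms(2) M(1) M(2)[OF i],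
            of \<tau>2 l s] v layer s \<tau>2
        by (auto simp: K_def l_def t\<epsilon>_def algebra_simps)
      moreover have "4 * l / \<tau>2 \<le> \<epsilon> / 8" using \<tau>2 by (simp add: l_def field_simps)
      ultimately show ?thesis using Kt[of \<tau>2] Kt[of s] \<tau>2 s assms(3) by simp
    qed
    ultimately show "\<exists>l>0. \<forall>i<m1. \<forall>x v. x \<in> ball (x0 i) d \<and> v \<in> cball 0 vM \<longrightarrow>
        (\<forall>X V. billiard_traj \<Omega> n x v X V \<longrightarrow>
          (\<forall>s\<in>{0..\<tau>2}. X s \<in> Omega_layer \<Omega> l \<inter> ball (x0 i) d) \<longrightarrow>
          (\<forall>s\<in>{0..t\<epsilon>}. norm (V s - v) < \<epsilon>))" by blast
  qed
qed

end
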